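(* Let $\mathbb{T} = \mathbb{R}^2 / 2\pi\mathbb{Z}^2$ be the flat torus with coordinates $(x,y)$, and let $\alpha, \beta \in \mathbb{R}$ with $\alpha/\beta$ irrational. Let $X$ be the vector field on $\mathbb{T}$ whose flow is the irrational winding $\psi_t(x,y) = (x + \alpha t, y + \beta t)$. Let $G: \mathbb{T} \to \mathbb{R}$ be smooth with Fourier expansion \[G(x,y) = \sum_{(n,m) \in \mathbb{Z}^2} \hat{G}(n,m) \exp(i(nx + my)),\] and let $\operatorname{Supp}\hat{G} = \{(n,m) \in \mathbb{Z}^2 : \hat{G}(n,m) \neq 0\}$. Then $G$ is a good observation for $X$ if and only if $\operatorname{Supp}\hat{G}$ generates $\mathbb{Z}^2$ as an abelian group.
   Context: $\hat{G}(n,m) \in \mathbb{C}$ denotes the $(n,m)$-th Fourier coefficient of $G$. For a smooth function $G$ on a compact manifold $M$ and a vector field $X$ with flow $\psi_t$, the Takens map $\Psi^N_\tau: M \to \mathbb{R}^{N+1}$ is $\Psi^N_\tau(p) = (G(p), G(\psi_\tau(p)), G(\psi_{2\tau}(p)), \ldots, G(\psi_{N\tau}(p)))$; $G$ is called a good observation for $X$ if there exist an integer $N > 0$ and $\tau > 0$ such that $\Psi^N_\tau$ is a (smooth) embedding. *)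

theory Defs
  imports "HOL-Analysis.Analysis"
begin

text \<open>Functions on the torus T = R^2 / 2 pi Z^2 are represented as functions on
  real \<times> real that are 2 pi-periodic in each coordinate.\<close>

definition torus_periodic :: "(real \<times> real \<Rightarrow> 'b) \<Rightarrow> bool" where
  "torus_periodic G \<longleftrightarrow>
     (\<forall>x y. G (x + 2*pi, y) = G (x, y) \<and> G (x, y + 2*pi) = G (x, y))"

definition torus_eq :: "real \<times> real \<Rightarrow> real \<times> real \<Rightarrow> bool" where
  "torus_eq p q \<longleftrightarrow>
     (\<exists>m n :: int. fst p - fst q = 2 * pi * (of_int m) \<and> snd p - snd q = 2 * pi * (of_int n))"

text \<open>C-infinity smoothness on R^2: differentiable everywhere, with both partial
  derivatives again C-infinity (greatest fixed point = derivatives of all orders).\<close>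
coinductive smooth2 :: "(real \<times> real \<Rightarrow> real) \<Rightarrow> bool" where
  "(\<And>p. (f has_derivative (\<lambda>h. fst h * fx p + snd h * fy p)) (at p))
    \<Longrightarrow> smooth2 fx \<Longrightarrow> smooth2 fy \<Longrightarrow> smooth2 f"

definition lin_flow :: "real \<Rightarrow> real \<Rightarrow> real \<Rightarrow> real \<times> real \<Rightarrow> real \<times> real" where
  "lin_flow a b t p = (fst p + a * t, snd p + b * t)"

definition fourier_coeff :: "(real \<times> real \<Rightarrow> real) \<Rightarrow> int \<Rightarrow> int \<Rightarrow> complex" where
  "fourier_coeff G n m =
     integral (cbox (0, 0) (2*pi, 2*pi))
       (\<lambda>p. complex_of_real (G p) * exp (- \<i> * complex_of_real (of_int n * fst p + of_int m * snd p)))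
     / complex_of_real (4 * pi^2)"

definition fourier_support :: "(real \<times> real \<Rightarrow> real) \<Rightarrow> (int \<times> int) set" where
  "fourier_support G = {(n, m). fourier_coeff G n m \<noteq> 0}"

inductive_set zgen :: "(int \<times> int) set \<Rightarrow> (int \<times> int) set" for S where
  zgen_zero: "0 \<in> zgen S"
| zgen_gen: "s \<in> S \<Longrightarrow> s \<in> zgen S"
| zgen_diff: "a \<in> zgen S \<Longrightarrow> b \<in> zgen S \<Longrightarrow> a - b \<in> zgen S"

text \<open>Takens map Psi^N_tau(p) = (G(p), G(psi_tau p), ..., G(psi_{N tau} p)) is a smooth
  embedding of the torus (compact, so = injective immersion): injective on torus
  points and with injective differential at every point.\<close>
definition takens_embedding ::
    "(real \<times> real \<Rightarrow> real) \<Rightarrow> real \<Rightarrow> real \<Rightarrow> nat \<Rightarrow> real \<Rightarrow> bool" where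
  "takens_embedding G a b N \<tau> \<longleftrightarrow>
     (\<forall>p q. (\<forall>k\<le>N. G (lin_flow a b (real k * \<tau>) p) = G (lin_flow a b (real k * \<tau>) q))
              \<longrightarrow> torus_eq p q)
   \<and> (\<forall>p h. h \<noteq> 0 \<longrightarrow>
        (\<exists>k\<le>N. frechet_derivative G (at (lin_flow a b (real k * \<tau>) p)) h \<noteq> 0))"

definition good_observation :: "(real \<times> real \<Rightarrow> real) \<Rightarrow> real \<Rightarrow> real \<Rightarrow> bool" where
  "good_observation G a b \<longleftrightarrow> (\<exists>N>0. \<exists>\<tau>>0. takens_embedding G a b N \<tau>)"

end

(*
  Suppose first that G(z + w) = G(z) for all z and some w that is not a lattice vector.
  Then the Takens map takes the same values at 0 and w, so it is not injective on the
  torus.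

  Conversely, suppose only lattice vectors are periods of G.  Choose tau such that
  tau alpha, tau beta and 2 pi are linearly independent over Z (all but countably many
  tau qualify); by Kronecker's theorem every orbit of the time-tau map is dense in the
  torus.  Two distinct points of the torus differ by s u with |u| = 1 and
  0 < s <= sqrt 2 pi < 2 pi, and the divided difference (G(z + s u) - G(z)) / s, which
  is the directional derivative for s = 0, cannot vanish for all z.  By density it is
  nonzero somewhere on every orbit, and compactness of the set of (z, u, s) bounds the
  number of steps needed uniformly.  This makes the Takens map injective and immersive.

  Finally, G(z + w) = G(z) for all z iff exp (i (n w1 + m w2)) = 1 for every (n, m) in
  the Fourier support; the nontrivial direction is uniqueness of Fourier coefficients,
  proved by Stone-Weierstrass on the product of two circles.  By duality between Z^2 and
  the torus, the only such w are lattice vectors iff the support generates Z^2.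
*)

theory Submission
  imports Defs "HOL-Library.Periodic_Fun"
begin

section \<open>Points and functions on the torus\<close>

abbreviation period_square :: "(real \<times> real) set" where
  "period_square \<equiv> cbox (0, 0) (2 * pi, 2 * pi)"

lemma torus_eq_sym: "torus_eq p q \<Longrightarrow> torus_eq q p"
  unfolding torus_eq_def by (metis minus_diff_eq mult_minus_right of_int_minus)

lemma torus_eq_translate: "torus_eq p q \<Longrightarrow> torus_eq (p + c) (q + c)"
  by (simp add: torus_eq_def)

lemma torus_eq_lattice_shift: "torus_eq (p + (2 * pi * of_int m, 2 * pi * of_int n)) p"
  unfolding torus_eq_def by auto

lemma torus_eq_0_iff: "torus_eq w 0 \<longleftrightarrow> fst w / (2 * pi) \<in> \<int> \<and> snd w / (2 * pi) \<in> \<int>"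
proof -
  have "(\<exists>k::int. x = 2 * pi * of_int k) \<longleftrightarrow> x / (2 * pi) \<in> \<int>" for x :: real
    by (auto elim!: Ints_cases simp: field_simps)
  then show ?thesis
    by (simp add: torus_eq_def)
qed

lemma torus_periodic_lattice_shift:
  assumes "torus_periodic G"
  shows "G (x + of_int m * (2 * pi), y + of_int n * (2 * pi)) = G (x, y)"
proof -
  interpret horizontal: periodic_fun_simple "\<lambda>x. G (x, y + of_int n * (2 * pi))" "2 * pi"
    using assms by unfold_locales (simp add: torus_periodic_def)
  interpret vertical: periodic_fun_simple "\<lambda>y. G (x, y)" "2 * pi"
    using assms by unfold_locales (simp add: torus_periodic_def)
  show ?thesis
    using horizontal.plus_of_int vertical.plus_of_int by simp
qed

lemma torus_periodic_torus_eq: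
  assumes "torus_periodic G" and "torus_eq p q"
  shows "G p = G q"
proof -
  obtain m n :: int where "fst p = fst q + of_int m * (2 * pi)" "snd p = snd q + of_int n * (2 * pi)"
    using assms(2) unfolding torus_eq_def by (auto simp: algebra_simps)
  then show ?thesis
    using torus_periodic_lattice_shift[OF assms(1)] by (metis prod.collapse)
qed

lemma torus_periodic_translate:
  assumes "torus_periodic G"
  shows "torus_periodic (\<lambda>z. G (z + w))"
proof -
  have "torus_eq ((x + 2 * pi, y) + w) ((x, y) + w)" "torus_eq ((x, y + 2 * pi) + w) ((x, y) + w)" for x y
    using torus_eq_translate[OF torus_eq_lattice_shift[of "(x, y)" 1 0], of w]
      torus_eq_translate[OF torus_eq_lattice_shift[of "(x, y)" 0 1], of w]
    by simp_all
  then show ?thesis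
    using torus_periodic_torus_eq[OF assms] by (simp add: torus_periodic_def)
qed

lemma torus_periodic_cis_eq:
  assumes "torus_periodic G" and "cis a = cis a'" and "cis b = cis b'"
  shows "G (a, b) = G (a', b')"
proof (rule torus_periodic_torus_eq[OF assms(1)])
  have "sin a = sin a' \<and> cos a = cos a'" "sin b = sin b' \<and> cos b = cos b'"
    using assms(2,3) by (simp_all add: complex_eq_iff)
  then obtain m n :: int where "a = a' + 2 * pi * of_int m" "b = b' + 2 * pi * of_int n"
    unfolding sin_cos_eq_iff by blast
  then show "torus_eq (a, b) (a', b')"
    unfolding torus_eq_def by auto
qed

lemma ex_int_shift_into_period:
  fixes x c T :: real
  assumes "0 < T"
  obtains k :: int where "c \<le> x - of_int k * T" "x - of_int k * T \<le> c + T"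
proof
  let ?k = "\<lfloor>(x - c) / T\<rfloor>"
  have "of_int ?k * T \<le> x - c" "x - c < of_int ?k * T + T"
    using floor_divide_lower[OF assms, of "x - c"] floor_divide_upper[OF assms, of "x - c"]
    by (simp_all add: algebra_simps)
  then show "c \<le> x - of_int ?k * T" "x - of_int ?k * T \<le> c + T"
    by linarith+
qed

lemma ex_torus_eq_in_period_square:
  obtains q where "torus_eq p q" "q \<in> period_square"
proof -
  obtain m :: int where "0 \<le> fst p - of_int m * (2 * pi)" "fst p - of_int m * (2 * pi) \<le> 2 * pi"
    using ex_int_shift_into_period[of "2 * pi" 0] by auto
  moreover obtain n :: int where "0 \<le> snd p - of_int n * (2 * pi)" "snd p - of_int n * (2 * pi) \<le> 2 * pi"
    using ex_int_shift_into_period[of "2 * pi" 0] by auto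
  ultimately show ?thesis
    by (intro that[of "(fst p - of_int m * (2 * pi), snd p - of_int n * (2 * pi))"])
       (auto simp: torus_eq_def)
qed

lemma ex_torus_eq_norm_le:
  obtains q where "torus_eq p q" "norm q \<le> sqrt 2 * pi"
proof -
  obtain q where q: "torus_eq (p + (pi, pi)) q" "q \<in> period_square"
    by (rule ex_torus_eq_in_period_square)
  have "torus_eq p (q - (pi, pi))"
    using torus_eq_translate[OF q(1), of "- (pi, pi)"]
    by (simp only: diff_conv_add_uminus[symmetric] add_diff_cancel_right')
  moreover have "(fst q - pi)\<^sup>2 \<le> pi\<^sup>2" "(snd q - pi)\<^sup>2 \<le> pi\<^sup>2"
    using q(2) by (cases q; simp add: abs_le_square_iff[symmetric] abs_le_iff)+
  then have "norm (q - (pi, pi)) \<le> sqrt (2 * pi\<^sup>2)"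
    by (simp add: norm_prod_def)
  ultimately show ?thesis
    using that by (simp add: real_sqrt_mult)
qed

lemma norm_ge_2pi_if_torus_eq_0:
  assumes "torus_eq w 0" and "w \<noteq> 0"
  shows "2 * pi \<le> norm w"
proof -
  obtain m n :: int where w: "w = (2 * pi * of_int m, 2 * pi * of_int n)"
    using assms(1) unfolding torus_eq_def by (metis diff_zero fst_zero prod.collapse snd_zero)
  then have "m \<noteq> 0 \<or> n \<noteq> 0"
    using assms(2) by (auto simp: zero_prod_def)
  then have "2 * pi \<le> \<bar>fst w\<bar> \<or> 2 * pi \<le> \<bar>snd w\<bar>"
    by (auto simp: w abs_mult)
  then show ?thesis
    by (metis norm_fst_le norm_snd_le order.trans real_norm_def prod.collapse fst_conv snd_conv)
qed

lemma integral_periodic_translate: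
  fixes f :: "real \<Rightarrow> 'a::banach"
  assumes "0 < T" and cont: "continuous_on UNIV f" and per: "\<And>x. f (x + T) = f x"
  shows "integral {0..T} (\<lambda>x. f (x + a)) = integral {0..T} f"
proof -
  interpret periodic_fun_simple f T
    using per by unfold_locales
  obtain k :: int where b: "0 \<le> a - of_int k * T" "a - of_int k * T \<le> T"
    using ex_int_shift_into_period[OF \<open>0 < T\<close>, of 0 a] by auto
  define b where "b = a - of_int k * T"
  have integrable: "f integrable_on {c..d}" for c d
    by (rule integrable_continuous_real) (rule continuous_on_subset[OF cont], simp)
  have "(\<lambda>x. f (x + a)) = f \<circ> (+) b"
  proof
    show "f (x + a) = (f \<circ> (+) b) x" for x
      using plus_of_int[of "b + x" k] by (simp add: b_def algebra_simps)
  qed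
  then have "integral {0..T} (\<lambda>x. f (x + a)) = integral {b..T + b} f"
    by (simp add: integral_shift_Icc_real add.commute)
  also have "\<dots> = integral {b..T} f + integral {T..T + b} f"
    using Henstock_Kurzweil_Integration.integral_combine[OF _ _ integrable, of b T "T + b"] b
    by (simp add: b_def)
  also have "integral {T..T + b} f = integral {0..b} f"
    using integral_shift_Icc_real[of 0 b f T] per by (simp add: o_def add.commute)
  also have "integral {b..T} f + integral {0..b} f = integral {0..T} f"
    using Henstock_Kurzweil_Integration.integral_combine[OF _ _ integrable, of 0 b T] b
    by (simp add: b_def add.commute)
  finally show ?thesis .
qed

lemma integral_torus_periodic_translate:
  fixes F :: "real \<times> real \<Rightarrow> 'a::banach"
  assumes cont: "continuous_on UNIV F" and per: "torus_periodic F"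
  shows "integral period_square (\<lambda>z. F (z + w)) = integral period_square F"
proof -
  define g where "g x = integral {0..2 * pi} (\<lambda>y. F (x, y))" for x
  have cont_on: "continuous_on S F" for S
    using cont continuous_on_subset by blast
  have cont_g: "continuous_on UNIV g"
    unfolding g_def cbox_interval[symmetric]
    by (rule integral_continuous_on_param) (auto simp: case_prod_unfold intro!: continuous_intros cont_on)
  have "integral period_square (\<lambda>z. F (z + w))
      = integral {0..2 * pi} (\<lambda>x. integral {0..2 * pi} (\<lambda>y. F (x + fst w, y + snd w)))"
    by (subst integral_prod_continuous)
       (auto simp: plus_prod_def intro!: continuous_intros cont_on continuous_on_compose2[OF cont])
  also have "\<dots> = integral {0..2 * pi} (\<lambda>x. g (x + fst w))"
    unfolding g_def using per
    by (intro integral_cong integral_periodic_translate[where f = "\<lambda>y. F (_, y)"])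
       (auto simp: torus_periodic_def intro!: continuous_intros continuous_on_compose2[OF cont])
  also have "\<dots> = integral {0..2 * pi} g"
    using per by (intro integral_periodic_translate cont_g) (auto simp: g_def torus_periodic_def)
  also have "\<dots> = integral period_square F"
    unfolding g_def by (subst integral_prod_continuous) (auto intro: cont_on)
  finally show ?thesis .
qed

section \<open>Characters and Fourier coefficients\<close>

definition character :: "int \<Rightarrow> int \<Rightarrow> real \<times> real \<Rightarrow> complex" where
  "character n m p = cis (of_int n * fst p + of_int m * snd p)"

lemma character_add: "character n m (p + q) = character n m p * character n m q"
  by (simp add: character_def cis_mult algebra_simps)

lemma character_mult: "character n m p * character n' m' p = character (n + n') (m + m') p"
  by (simp add: character_def cis_mult algebra_simps)

lemma character_0_0 [simp]: "character 0 0 p = 1"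
  by (simp add: character_def)

lemma continuous_on_character [continuous_intros]: "continuous_on S (character n m)"
  unfolding character_def by (intro continuous_intros)

lemma cis_add_2pi_int: "cis (t + 2 * pi * of_int k) = cis t"
  using cis_multiple_2pi[of "of_int k"] by (simp add: cis_mult[symmetric])

lemma torus_periodic_character: "torus_periodic (character n m)"
proof -
  have "cis (of_int n * (x + 2 * pi) + of_int m * y) = cis (of_int n * x + of_int m * y)"
    "cis (of_int n * x + of_int m * (y + 2 * pi)) = cis (of_int n * x + of_int m * y)" for x y
    using cis_add_2pi_int[of "of_int n * x + of_int m * y" n]
      cis_add_2pi_int[of "of_int n * x + of_int m * y" m]
    by (simp_all add: algebra_simps)
  then show ?thesis
    unfolding torus_periodic_def character_def by simp
qed

lemma cis_eq_1_iff: "cis t = 1 \<longleftrightarrow> t / (2 * pi) \<in> \<int>"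
proof -
  have "cis t = 1 \<longleftrightarrow> (\<exists>k::int. t = of_int k * (2 * pi))"
    unfolding cis_conv_exp exp_eq_1 by (simp add: mult_ac)
  also have "\<dots> \<longleftrightarrow> t / (2 * pi) \<in> \<int>"
  proof
    assume "\<exists>k::int. t = of_int k * (2 * pi)"
    then show "t / (2 * pi) \<in> \<int>"
      by auto
  next
    assume "t / (2 * pi) \<in> \<int>"
    then obtain k where "t / (2 * pi) = of_int k"
      by (elim Ints_cases)
    then show "\<exists>k::int. t = of_int k * (2 * pi)"
      by (auto simp: field_simps)
  qed
  finally show ?thesis .
qed

lemma character_eq_1_iff:
  "character n m w = 1 \<longleftrightarrow> (of_int n * fst w + of_int m * snd w) / (2 * pi) \<in> \<int>"
  by (simp add: character_def cis_eq_1_iff)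

lemma fourier_coeff_character:
  "fourier_coeff G n m =
     integral period_square (\<lambda>p. of_real (G p) * character (- n) (- m) p) / of_real (4 * pi\<^sup>2)"
proof -
  have "character (- n) (- m) p = exp (- \<i> * of_real (of_int n * fst p + of_int m * snd p))" for p
    by (simp add: character_def cis_conv_exp algebra_simps)
  then show ?thesis
    by (simp add: fourier_coeff_def)
qed

lemma integrable_on_character_mult:
  assumes "continuous_on UNIV G"
  shows "(\<lambda>p. of_real (G p) * character n m p) integrable_on cbox a b"
proof (rule integrable_continuous)
  have "continuous_on (cbox a b) G"
    using assms continuous_on_subset by blast
  then show "continuous_on (cbox a b) (\<lambda>p. of_real (G p) * character n m p)"
    by (intro continuous_on_mult continuous_on_of_real continuous_on_character)
qed

lemma fourier_coeff_translate:
  assumes cont: "continuous_on UNIV G" and per: "torus_periodic G"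
  shows "fourier_coeff (\<lambda>z. G (z + w)) n m = character n m w * fourier_coeff G n m"
proof -
  define F where "F p = of_real (G p) * character (- n) (- m) p" for p
  have "continuous_on UNIV F"
    unfolding F_def by (intro continuous_intros continuous_on_compose2[OF cont]) auto
  moreover have "torus_periodic F"
    using per torus_periodic_character unfolding F_def torus_periodic_def by simp
  ultimately have integral_F: "integral period_square (\<lambda>p. F (p + w)) = integral period_square F"
    by (rule integral_torus_periodic_translate)
  have "character n m w * F (p + w) = of_real (G (p + w)) * character (- n) (- m) p" for p
  proof -
    have "character n m w * F (p + w)
        = of_real (G (p + w)) * character (- n) (- m) p * (character n m w * character (- n) (- m) w)"
      by (simp add: F_def character_add ac_simps)
    then show ?thesis
      by (simp add: character_mult)
  qed
  then have "(\<lambda>p. of_real (G (p + w)) * character (- n) (- m) p) = (\<lambda>p. character n m w * F (p + w))"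
    by simp
  then have coeff_translate: "fourier_coeff (\<lambda>z. G (z + w)) n m
      = character n m w * integral period_square (\<lambda>p. F (p + w)) / of_real (4 * pi\<^sup>2)"
    by (simp add: fourier_coeff_character)
  have coeff_G: "fourier_coeff G n m = integral period_square F / of_real (4 * pi\<^sup>2)"
    unfolding F_def by (rule fourier_coeff_character)
  show ?thesis
    unfolding coeff_translate integral_F coeff_G by simp
qed

lemma fourier_coeff_diff:
  assumes "continuous_on UNIV G" and "continuous_on UNIV H"
  shows "fourier_coeff (\<lambda>z. G z - H z) n m = fourier_coeff G n m - fourier_coeff H n m"
proof -
  have "(\<lambda>p. of_real (G p - H p) * character (- n) (- m) p)
      = (\<lambda>p. of_real (G p) * character (- n) (- m) p - of_real (H p) * character (- n) (- m) p)"
    by (simp add: algebra_simps)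
  then show ?thesis
    by (simp add: fourier_coeff_character diff_divide_distrib
        integral_diff[OF integrable_on_character_mult[OF assms(1)] integrable_on_character_mult[OF assms(2)]])
qed

section \<open>Uniqueness of Fourier coefficients\<close>

inductive_set trig_poly :: "(real \<times> real \<Rightarrow> complex) set" where
  trig_poly_character: "character n m \<in> trig_poly"
| trig_poly_add: "f \<in> trig_poly \<Longrightarrow> g \<in> trig_poly \<Longrightarrow> (\<lambda>z. f z + g z) \<in> trig_poly"
| trig_poly_scale: "f \<in> trig_poly \<Longrightarrow> (\<lambda>z. c * f z) \<in> trig_poly"

lemma trig_poly_const: "(\<lambda>z. c) \<in> trig_poly"
  using trig_poly_scale[OF trig_poly_character[of 0 0], of c] by simp

lemma trig_poly_mult_character: "g \<in> trig_poly \<Longrightarrow> (\<lambda>z. character n m z * g z) \<in> trig_poly"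
proof (induction rule: trig_poly.induct)
  case (trig_poly_character n' m')
  then show ?case
    using trig_poly.trig_poly_character[of "n + n'" "m + m'"] by (simp add: character_mult)
next
  case (trig_poly_add f g)
  then show ?case
    using trig_poly.trig_poly_add[OF trig_poly_add.IH] by (simp add: distrib_left)
next
  case (trig_poly_scale f c)
  then show ?case
    using trig_poly.trig_poly_scale[OF trig_poly_scale.IH, of c] by (simp add: mult.left_commute)
qed

lemma trig_poly_mult: "f \<in> trig_poly \<Longrightarrow> g \<in> trig_poly \<Longrightarrow> (\<lambda>z. f z * g z) \<in> trig_poly"
proof (induction f rule: trig_poly.induct)
  case (trig_poly_character n m)
  then show ?case
    by (rule trig_poly_mult_character)
next
  case (trig_poly_add f1 f2)
  then show ?case
    using trig_poly.trig_poly_add[OF trig_poly_add.IH] by (simp add: distrib_right)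
next
  case (trig_poly_scale f c)
  then show ?case
    using trig_poly.trig_poly_scale[OF trig_poly_scale.IH, of c] by (simp add: mult.assoc)
qed

lemma continuous_on_trig_poly: "f \<in> trig_poly \<Longrightarrow> continuous_on S f"
  by (induction rule: trig_poly.induct) (auto intro: continuous_on_add continuous_on_mult
      continuous_on_const continuous_on_character)

lemma trig_poly_cos_sin:
  "(\<lambda>z. of_real (cos (of_int n * fst z + of_int m * snd z))) \<in> trig_poly"
  "(\<lambda>z. of_real (sin (of_int n * fst z + of_int m * snd z))) \<in> trig_poly"
proof -
  define t :: "real \<times> real \<Rightarrow> real" where "t z = of_int n * fst z + of_int m * snd z" for z
  have cos: "of_real (cos x) = (1 / 2) * cis x + (1 / 2) * cis (- x)"
    and sin: "of_real (sin x) = (1 / (2 * \<i>)) * cis x + (- 1 / (2 * \<i>)) * cis (- x)" for x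
    by (simp_all add: complex_eq_iff)
  have "character n m z = cis (t z)" "character (- n) (- m) z = cis (- t z)" for z
    by (simp_all add: character_def t_def algebra_simps)
  then have "(\<lambda>z. c * cis (t z) + d * cis (- t z)) \<in> trig_poly" for c d
    using trig_poly_add[OF trig_poly_scale trig_poly_scale, OF trig_poly_character trig_poly_character,
        of c n m d "- n" "- m"]
    by simp
  then have "(\<lambda>z. of_real (cos (t z))) \<in> trig_poly" "(\<lambda>z. of_real (sin (t z))) \<in> trig_poly"
    unfolding cos sin by blast+
  then show "(\<lambda>z. of_real (cos (of_int n * fst z + of_int m * snd z))) \<in> trig_poly"
    "(\<lambda>z. of_real (sin (of_int n * fst z + of_int m * snd z))) \<in> trig_poly"
    by (simp_all add: t_def)
qed

lemma integral_trig_poly_orthogonal: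
  fixes F :: "real \<times> real \<Rightarrow> real"
  assumes cont: "continuous_on UNIV F" and zero: "\<And>n m. fourier_coeff F n m = 0"
  shows "f \<in> trig_poly \<Longrightarrow> integral period_square (\<lambda>z. of_real (F z) * f z) = 0"
proof (induction rule: trig_poly.induct)
  case (trig_poly_character n m)
  show ?case
    using zero[of "- n" "- m"] by (simp add: fourier_coeff_character)
next
  case (trig_poly_add f g)
  have "(\<lambda>z. of_real (F z) * h z) integrable_on period_square" if "h \<in> trig_poly" for h
    using that by (intro integrable_continuous continuous_on_mult continuous_on_of_real
        continuous_on_subset[OF cont] continuous_on_trig_poly) auto
  then show ?case
    using trig_poly_add by (simp add: distrib_left integral_add)
next
  case (trig_poly_scale f c)
  then show ?case
    by (simp add: mult.left_commute)
qed

definition cis_pair :: "real \<times> real \<Rightarrow> complex \<times> complex" where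
  "cis_pair p = (cis (fst p), cis (snd p))"

(* The torus is identified with the product of two unit circles via cis_pair; there the
   Stone-Weierstrass theorem applies. *)
definition circle_lift :: "(real \<times> real \<Rightarrow> 'a) \<Rightarrow> complex \<times> complex \<Rightarrow> 'a" where
  "circle_lift F w = F (Arg (fst w), Arg (snd w))"

lemma cis_pair_in_circles: "cis_pair p \<in> sphere 0 1 \<times> sphere 0 1"
  by (simp add: cis_pair_def)

lemma circle_lift_cis_pair:
  assumes "torus_periodic F"
  shows "circle_lift F (cis_pair p) = F p"
  using torus_periodic_cis_eq[OF assms, of "Arg (cis (fst p))" "fst p" "Arg (cis (snd p))" "snd p"]
  by (simp add: circle_lift_def cis_pair_def cis_Arg)

lemma continuous_arg_branch:
  fixes v :: complex
  assumes "v \<noteq> 0"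
  obtains \<theta> where "isCont \<theta> v" "\<And>u. u \<noteq> 0 \<Longrightarrow> cis (\<theta> u) = sgn u"
proof (cases "v \<in> \<real>\<^sub>\<le>\<^sub>0")
  case False
  then show ?thesis
    using that[of Arg] continuous_at_Arg cis_Arg by blast
next
  case True
  then have "- v \<notin> \<real>\<^sub>\<le>\<^sub>0"
    using assms by (auto simp: complex_nonpos_Reals_iff complex_eq_iff)
  then have "isCont (\<lambda>u. Arg (- u)) v"
    by (intro isCont_o2[OF continuous_minus[OF continuous_ident] continuous_at_Arg]) simp
  then have "isCont (\<lambda>u. Arg (- u) + pi) v"
    by (intro continuous_add continuous_const)
  moreover have "cis (Arg (- u) + pi) = sgn u" if "u \<noteq> 0" for u
    using that by (simp add: minus_cis[symmetric] cis_Arg sgn_minus)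
  ultimately show ?thesis
    using that by blast
qed

lemma continuous_on_circle_lift:
  assumes cont: "continuous_on UNIV F" and per: "torus_periodic F"
  shows "continuous_on (sphere 0 1 \<times> sphere 0 1) (circle_lift F)"
  unfolding continuous_on_eq_continuous_within
proof
  fix w :: "complex \<times> complex"
  assume w: "w \<in> sphere 0 1 \<times> sphere 0 1"
  then have "fst w \<noteq> 0" "snd w \<noteq> 0"
    by auto
  obtain \<theta>1 where \<theta>1: "isCont \<theta>1 (fst w)" "\<And>u. u \<noteq> 0 \<Longrightarrow> cis (\<theta>1 u) = sgn u"
    using continuous_arg_branch[OF \<open>fst w \<noteq> 0\<close>] by blast
  obtain \<theta>2 where \<theta>2: "isCont \<theta>2 (snd w)" "\<And>u. u \<noteq> 0 \<Longrightarrow> cis (\<theta>2 u) = sgn u"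
    using continuous_arg_branch[OF \<open>snd w \<noteq> 0\<close>] by blast
  define g where "g v = F (\<theta>1 (fst v), \<theta>2 (snd v))" for v
  have "isCont F p" for p
    using cont continuous_on_eq_continuous_at open_UNIV by blast
  moreover have "isCont (\<lambda>v. (\<theta>1 (fst v), \<theta>2 (snd v))) w"
    by (intro continuous_Pair isCont_o2[OF continuous_fst[OF continuous_ident] \<theta>1(1)]
        isCont_o2[OF continuous_snd[OF continuous_ident] \<theta>2(1)])
  ultimately have "isCont g w"
    unfolding g_def by (metis isCont_o2)
  moreover have "g v = circle_lift F v" if "v \<in> sphere 0 1 \<times> sphere 0 1" for v
  proof -
    have "fst v \<noteq> 0" "snd v \<noteq> 0"
      using that by auto
    then show ?thesis
      unfolding g_def circle_lift_def
      by (intro torus_periodic_cis_eq[OF per]) (simp_all add: \<theta>1(2) \<theta>2(2) cis_Arg)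
  qed
  ultimately show "continuous (at w within sphere 0 1 \<times> sphere 0 1) (circle_lift F)"
    using continuous_transform_within_openin[OF continuous_at_imp_continuous_within openin_subtopology_self w]
    by blast
qed

lemma trig_poly_linear:
  assumes "bounded_linear f"
  shows "(\<lambda>z. of_real (f (cis_pair z))) \<in> trig_poly"
proof -
  interpret f: bounded_linear f
    by (fact assms)
  have decomp: "f (a, b) = Re a * f (1, 0) + Im a * f (\<i>, 0) + Re b * f (0, 1) + Im b * f (0, \<i>)" for a b
  proof -
    have "(a, b) = Re a *\<^sub>R (1, 0) + Im a *\<^sub>R (\<i>, 0) + Re b *\<^sub>R (0, 1) + Im b *\<^sub>R (0, \<i>)"
      by (simp add: complex_eq_iff scaleR_conv_of_real)
    then have "f (a, b) = f (Re a *\<^sub>R (1, 0) + Im a *\<^sub>R (\<i>, 0) + Re b *\<^sub>R (0, 1) + Im b *\<^sub>R (0, \<i>))"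
      by (rule arg_cong)
    then show ?thesis
      by (simp only: f.add f.scale real_scaleR_def)
  qed
  have "(of_real (f (cis_pair z)) :: complex)
      = of_real (f (1, 0)) * of_real (cos (fst z)) + of_real (f (\<i>, 0)) * of_real (sin (fst z))
        + of_real (f (0, 1)) * of_real (cos (snd z)) + of_real (f (0, \<i>)) * of_real (sin (snd z))" for z
    unfolding cis_pair_def decomp[of "cis (fst z)" "cis (snd z)"] by (simp add: mult.commute)
  moreover have "(\<lambda>z. of_real (f (1, 0)) * of_real (cos (fst z)) + of_real (f (\<i>, 0)) * of_real (sin (fst z))
        + of_real (f (0, 1)) * of_real (cos (snd z)) + of_real (f (0, \<i>)) * of_real (sin (snd z)))
      \<in> trig_poly"
    using trig_poly_cos_sin[of 1 0] trig_poly_cos_sin[of 0 1]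
    by (intro trig_poly_add trig_poly_scale) simp_all
  ultimately show ?thesis
    by simp
qed

lemma trig_poly_real_polynomial_function:
  "real_polynomial_function P \<Longrightarrow> (\<lambda>z. of_real (P (cis_pair z))) \<in> trig_poly"
proof (induction rule: real_polynomial_function.induct)
  case (linear f)
  then show ?case
    by (rule trig_poly_linear)
next
  case (const c)
  then show ?case
    by (rule trig_poly_const)
next
  case (add f g)
  then show ?case
    using trig_poly_add[OF add.IH] by simp
next
  case (mult f g)
  then show ?case
    using trig_poly_mult[OF mult.IH] by simp
qed

lemma trig_poly_approximation:
  fixes F :: "real \<times> real \<Rightarrow> real"
  assumes "continuous_on UNIV F" and per: "torus_periodic F" and "0 < e"
  obtains P where "(\<lambda>z. of_real (P z)) \<in> trig_poly" "\<And>z. \<bar>F z - P z\<bar> < e"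
proof -
  have "compact (sphere (0::complex) 1 \<times> sphere (0::complex) 1)"
    by (intro compact_Times compact_sphere)
  then obtain Q where "real_polynomial_function Q"
    and Q: "\<And>w. w \<in> sphere 0 1 \<times> sphere 0 1 \<Longrightarrow> \<bar>circle_lift F w - Q w\<bar> < e"
    using Stone_Weierstrass_real_polynomial_function continuous_on_circle_lift[OF assms(1,2)] \<open>0 < e\<close>
    by blast
  show ?thesis
  proof
    show "(\<lambda>z. of_real (Q (cis_pair z))) \<in> trig_poly"
      by (rule trig_poly_real_polynomial_function) fact
    show "\<bar>F z - Q (cis_pair z)\<bar> < e" for z
      using Q[OF cis_pair_in_circles] by (simp add: circle_lift_cis_pair[OF per])
  qed
qed

lemma integral_mult_real_trig_poly_eq_0:
  fixes F P :: "real \<times> real \<Rightarrow> real"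
  assumes cont: "continuous_on UNIV F" and zero: "\<And>n m. fourier_coeff F n m = 0"
    and P: "(\<lambda>z. of_real (P z)) \<in> trig_poly"
  shows "integral period_square (\<lambda>z. F z * P z) = 0"
proof -
  have "continuous_on UNIV P"
    using continuous_on_Re[OF continuous_on_trig_poly[OF P]] by simp
  then have "(\<lambda>z. F z * P z) integrable_on period_square"
    by (intro integrable_continuous continuous_on_mult continuous_on_subset[OF cont]
        continuous_on_subset[OF \<open>continuous_on UNIV P\<close>]) auto
  then have "((\<lambda>z. of_real (F z * P z) :: complex) has_integral of_real (integral period_square (\<lambda>z. F z * P z)))
      period_square"
    by (intro has_integral_of_real integrable_integral)
  moreover have "integral period_square (\<lambda>z. of_real (F z * P z) :: complex) = 0"
    using integral_trig_poly_orthogonal[OF cont zero P] by simp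
  ultimately show ?thesis
    by (simp add: integral_unique)
qed

lemma integral_square_le_if_trig_poly_approx:
  fixes F P :: "real \<times> real \<Rightarrow> real"
  assumes cont: "continuous_on UNIV F" and zero: "\<And>n m. fourier_coeff F n m = 0"
    and P: "(\<lambda>z. of_real (P z)) \<in> trig_poly" and approx: "\<And>z. \<bar>F z - P z\<bar> \<le> e"
  shows "integral period_square (\<lambda>z. F z * F z) \<le> e * integral period_square (\<lambda>z. \<bar>F z\<bar>)"
proof -
  have cont_on: "continuous_on S F" for S
    using cont continuous_on_subset by blast
  have integrable: "(\<lambda>z. F z * g z) integrable_on period_square" if "continuous_on UNIV g" for g
    by (intro integrable_continuous continuous_on_mult cont_on continuous_on_subset[OF that]) auto
  have "continuous_on UNIV P"
    using continuous_on_Re[OF continuous_on_trig_poly[OF P]] by simp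
  then have "integral period_square (\<lambda>z. F z * F z) = integral period_square (\<lambda>z. F z * (F z - P z))"
    using integral_mult_real_trig_poly_eq_0[OF cont zero P] integral_diff[OF integrable[OF cont] integrable[of P]]
    by (simp add: right_diff_distrib)
  also have "\<dots> \<le> integral period_square (\<lambda>z. e * \<bar>F z\<bar>)"
  proof (rule integral_le)
    show "(\<lambda>z. F z * (F z - P z)) integrable_on period_square"
      by (intro integrable continuous_on_diff cont \<open>continuous_on UNIV P\<close>)
    show "(\<lambda>z. e * \<bar>F z\<bar>) integrable_on period_square"
      by (intro integrable_continuous continuous_on_mult continuous_on_const continuous_on_rabs cont_on)
    show "F z * (F z - P z) \<le> e * \<bar>F z\<bar>" for z
    proof -
      have "F z * (F z - P z) \<le> \<bar>F z\<bar> * \<bar>F z - P z\<bar>"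
        by (metis abs_ge_self abs_mult)
      also have "\<dots> \<le> \<bar>F z\<bar> * e"
        using approx[of z] by (intro mult_left_mono) auto
      finally show ?thesis
        by (simp add: mult.commute)
    qed
  qed
  finally show ?thesis
    by simp
qed

lemma integral_square_eq_0_if_fourier_coeff_eq_0:
  fixes F :: "real \<times> real \<Rightarrow> real"
  assumes cont: "continuous_on UNIV F" and per: "torus_periodic F"
    and zero: "\<And>n m. fourier_coeff F n m = 0"
  shows "integral period_square (\<lambda>z. F z * F z) = 0"
proof (rule antisym)
  define c where "c = integral period_square (\<lambda>z. \<bar>F z\<bar>)"
  have "c \<ge> 0"
    unfolding c_def
    by (intro integral_nonneg integrable_continuous continuous_on_rabs continuous_on_subset[OF cont]) auto
  show "integral period_square (\<lambda>z. F z * F z) \<le> 0"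
  proof (rule field_le_epsilon)
    fix e :: real
    assume "0 < e"
    then obtain P where "(\<lambda>z. of_real (P z)) \<in> trig_poly" "\<And>z. \<bar>F z - P z\<bar> < e / (c + 1)"
      using trig_poly_approximation[OF cont per, of "e / (c + 1)"] \<open>c \<ge> 0\<close> by auto
    then have "integral period_square (\<lambda>z. F z * F z) \<le> e / (c + 1) * c"
      unfolding c_def by (intro integral_square_le_if_trig_poly_approx[OF cont zero]) (auto intro: less_imp_le)
    also have "\<dots> \<le> e"
      using \<open>0 < e\<close> \<open>c \<ge> 0\<close> by (simp add: field_simps)
    finally show "integral period_square (\<lambda>z. F z * F z) \<le> 0 + e"
      by simp
  qed
  show "0 \<le> integral period_square (\<lambda>z. F z * F z)"
    by (intro integral_nonneg integrable_continuous continuous_on_mult continuous_on_subset[OF cont]) auto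
qed

lemma fourier_coeff_eq_0_imp_eq_0:
  fixes F :: "real \<times> real \<Rightarrow> real"
  assumes cont: "continuous_on UNIV F" and per: "torus_periodic F"
    and zero: "\<And>n m. fourier_coeff F n m = 0"
  shows "F z = 0"
proof -
  have cont_square: "continuous_on period_square (\<lambda>z. F z * F z)"
    by (intro continuous_on_mult continuous_on_subset[OF cont]) auto
  then have "((\<lambda>z. F z * F z) has_integral 0) period_square"
    using integral_square_eq_0_if_fourier_coeff_eq_0[OF assms] integrable_continuous[OF cont_square]
    by (metis has_integral_integrable_integral)
  then have square: "F q = 0" if "q \<in> period_square" for q
    using has_integral_0_cbox_imp_0[OF cont_square, of q] that
    by (auto simp: box_ne_empty inner_Pair Basis_prod_def)
  obtain q where "torus_eq z q" "q \<in> period_square"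
    by (rule ex_torus_eq_in_period_square)
  then show ?thesis
    using torus_periodic_torus_eq[OF per] square by metis
qed

section \<open>Subgroups of the integer lattice and their annihilators\<close>

lemma int_subgroup_mult:
  fixes A :: "int set"
  assumes zero: "0 \<in> A" and diff: "\<And>x y. x \<in> A \<Longrightarrow> y \<in> A \<Longrightarrow> x - y \<in> A" and "c \<in> A"
  shows "k * c \<in> A"
proof (induction k rule: int_induct[where k = 0])
  case base
  then show ?case
    using zero by simp
next
  case (step1 i)
  have "i * c - (0 - c) \<in> A"
    using step1 diff[OF zero \<open>c \<in> A\<close>] diff by blast
  then show ?case
    by (simp add: algebra_simps)
next
  case (step2 i)
  have "i * c - c \<in> A"
    using step2 diff \<open>c \<in> A\<close> by blast
  then show ?case
    by (simp add: algebra_simps)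
qed

lemma int_subgroup_common_divisor:
  fixes A :: "int set"
  assumes zero: "0 \<in> A" and diff: "\<And>x y. x \<in> A \<Longrightarrow> y \<in> A \<Longrightarrow> x - y \<in> A" and "1 \<notin> A"
  obtains d :: int where "2 \<le> d" "\<And>x. x \<in> A \<Longrightarrow> d dvd x"
proof (cases "\<exists>x\<in>A. 0 < x")
  case False
  have "x = 0" if "x \<in> A" for x
  proof -
    have "\<not> 0 < x" "\<not> 0 < 0 - x"
      using False that diff[OF zero that] by blast+
    then show ?thesis
      by linarith
  qed
  then show ?thesis
    using that[of 2] by auto
next
  case True
  define g where "g = (LEAST n. 0 < n \<and> int n \<in> A)"
  have g: "0 < g \<and> int g \<in> A"
    unfolding g_def by (rule LeastI_ex) (use True in \<open>metis zero_less_imp_eq_int\<close>)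
  have g_least: "g \<le> nat x" if "x \<in> A" "0 < x" for x
    unfolding g_def by (rule Least_le) (use that in simp)
  have "2 \<le> int g"
    using g \<open>1 \<notin> A\<close> by (cases "g = 1") auto
  moreover have "int g dvd x" if "x \<in> A" for x
  proof -
    have "int g \<in> A"
      using g by blast
    then have "x - (x div int g) * int g \<in> A"
      by (intro diff that int_subgroup_mult[OF zero diff])
    then have "x mod int g \<in> A"
      by (simp add: minus_div_mult_eq_mod)
    moreover have "0 \<le> x mod int g" "x mod int g < int g"
      using g by simp_all
    ultimately have "x mod int g = 0"
      using g_least[of "x mod int g"] by (cases "x mod int g = 0") auto
    then show ?thesis
      by (simp add: dvd_eq_mod_eq_0)
  qed
  ultimately show ?thesis
    using that by blast
qed

lemma zgen_least:
  assumes "0 \<in> H" and "S \<subseteq> H" and "\<And>a b. a \<in> H \<Longrightarrow> b \<in> H \<Longrightarrow> a - b \<in> H"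
  shows "zgen S \<subseteq> H"
proof
  show "a \<in> H" if "a \<in> zgen S" for a
    using that by (induction rule: zgen.induct) (use assms in auto)
qed

lemma zgen_add:
  assumes "a \<in> zgen S" and "b \<in> zgen S"
  shows "a + b \<in> zgen S"
  using zgen_diff[OF assms(1) zgen_diff[OF zgen_zero assms(2)]] by simp

lemma zgen_scale:
  assumes "a \<in> zgen S"
  shows "(k * fst a, k * snd a) \<in> zgen S"
proof -
  let ?A = "{k. (k * fst a, k * snd a) \<in> zgen S}"
  have "0 \<in> ?A"
    using zgen_zero[of S] by (simp add: zero_prod_def)
  moreover have "x - y \<in> ?A" if "x \<in> ?A" "y \<in> ?A" for x y
    using zgen_diff[of "(x * fst a, x * snd a)" S "(y * fst a, y * snd a)"] that
    by (simp add: left_diff_distrib)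
  moreover have "1 \<in> ?A"
    using assms by simp
  ultimately have "k * 1 \<in> ?A"
    by (rule int_subgroup_mult)
  then show ?thesis
    by simp
qed

lemma one_div_int_notin_Ints:
  fixes d :: int
  assumes "2 \<le> d"
  shows "1 / of_int d \<notin> (\<int> :: real set)"
proof
  assume "1 / of_int d \<in> (\<int> :: real set)"
  then obtain k :: int where k: "1 / of_int d = (of_int k :: real)"
    by (elim Ints_cases)
  have "0 < (1 / of_int d :: real)" "(1 / of_int d :: real) < 1"
    using assms by auto
  then show False
    unfolding k by simp
qed

(* The character (n, m) \<mapsto> exp (2 pi i (n theta1 + m theta2)) of Z^2 is trivial on H. *)
definition annihilates :: "real \<Rightarrow> real \<Rightarrow> (int \<times> int) set \<Rightarrow> bool" where
  "annihilates \<theta>1 \<theta>2 H \<longleftrightarrow> (\<forall>(n, m) \<in> H. of_int n * \<theta>1 + of_int m * \<theta>2 \<in> (\<int> :: real set))"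

lemma annihilates_zgen_iff: "annihilates \<theta>1 \<theta>2 (zgen S) \<longleftrightarrow> annihilates \<theta>1 \<theta>2 S"
proof
  assume "annihilates \<theta>1 \<theta>2 S"
  let ?H = "{(n, m). of_int n * \<theta>1 + of_int m * \<theta>2 \<in> (\<int> :: real set)}"
  have "zgen S \<subseteq> ?H"
  proof (rule zgen_least)
    show "a - b \<in> ?H" if "a \<in> ?H" "b \<in> ?H" for a b
    proof -
      obtain n m n' m' where ab: "a = (n, m)" "b = (n', m')"
        by fastforce
      have "of_int (n - n') * \<theta>1 + of_int (m - m') * \<theta>2
          = (of_int n * \<theta>1 + of_int m * \<theta>2) - (of_int n' * \<theta>1 + of_int m' * \<theta>2)"
        by (simp add: algebra_simps)
      then show ?thesis
        using that Ints_diff by (auto simp: ab)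
    qed
  qed (use \<open>annihilates \<theta>1 \<theta>2 S\<close> in \<open>auto simp: annihilates_def zero_prod_def\<close>)
  then show "annihilates \<theta>1 \<theta>2 (zgen S)"
    by (auto simp: annihilates_def)
qed (auto simp: annihilates_def intro: zgen_gen)

lemma zgen_annihilator_if_no_first_unit:
  assumes "\<And>b. (1, b) \<notin> zgen S"
  obtains d :: int where "2 \<le> d" "annihilates (1 / of_int d) 0 (zgen S)"
proof -
  let ?A = "{n. \<exists>m. (n, m) \<in> zgen S}"
  have "0 \<in> ?A"
    using zgen_zero[of S] by (auto simp: zero_prod_def)
  moreover have "x - y \<in> ?A" if "x \<in> ?A" "y \<in> ?A" for x y
    using that zgen_diff[of "(x, _)" S "(y, _)"] by fastforce
  moreover have "1 \<notin> ?A"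
    using assms by blast
  ultimately obtain d where d: "2 \<le> d" "\<And>n. n \<in> ?A \<Longrightarrow> d dvd n"
    using int_subgroup_common_divisor[of ?A] by blast
  have "annihilates (1 / of_int d) 0 (zgen S)"
    unfolding annihilates_def using of_int_divide_in_Ints d(2) by fastforce
  with d(1) show ?thesis
    by (rule that)
qed

lemma zgen_eq_UNIV_if_units:
  assumes b: "(1, b) \<in> zgen S" and "(0, 1) \<in> zgen S"
  shows "zgen S = UNIV"
proof -
  have "(n, m) \<in> zgen S" for n m
  proof -
    have "(n, n * b) \<in> zgen S"
      using zgen_scale[OF b, of n] by simp
    moreover have "(0, m - n * b) \<in> zgen S"
      using zgen_scale[OF assms(2), of "m - n * b"] by simp
    ultimately have "(n, n * b) + (0, m - n * b) \<in> zgen S"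
      by (rule zgen_add)
    then show ?thesis
      by simp
  qed
  then show ?thesis
    by auto
qed

lemma zgen_annihilator_if_first_unit:
  assumes b: "(1, b) \<in> zgen S" and "zgen S \<noteq> UNIV"
  obtains d :: int where "2 \<le> d" "annihilates (- of_int b / of_int d) (1 / of_int d) (zgen S)"
proof -
  let ?C = "{m. (0, m) \<in> zgen S}"
  have "0 \<in> ?C"
    using zgen_zero[of S] by (simp add: zero_prod_def)
  moreover have "x - y \<in> ?C" if "x \<in> ?C" "y \<in> ?C" for x y
    using that zgen_diff[of "(0, x)" S "(0, y)"] by simp
  moreover have "1 \<notin> ?C"
    using zgen_eq_UNIV_if_units[OF b] assms(2) by blast
  ultimately obtain d where d: "2 \<le> d" "\<And>m. m \<in> ?C \<Longrightarrow> d dvd m"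
    using int_subgroup_common_divisor[of ?C] by blast
  have "of_int n * (- of_int b / of_int d) + of_int m * (1 / of_int d) \<in> (\<int> :: real set)"
    if "(n, m) \<in> zgen S" for n m
  proof -
    have "(n, m) - (n * 1, n * b) \<in> zgen S"
      using zgen_diff[OF that zgen_scale[OF b, of n]] by simp
    then have "d dvd m - n * b"
      using d(2) by simp
    then have "of_int (m - n * b) / of_int d \<in> (\<int> :: real set)"
      by (rule of_int_divide_in_Ints)
    moreover have "of_int n * (- of_int b / of_int d) + of_int m * (1 / of_int d)
        = (of_int (m - n * b) / of_int d :: real)"
      using d(1) by (simp add: field_simps)
    ultimately show ?thesis
      by simp
  qed
  then have "annihilates (- of_int b / of_int d) (1 / of_int d) (zgen S)"
    unfolding annihilates_def by blast
  with d(1) show ?thesis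
    by (rule that)
qed

lemma zgen_eq_UNIV_iff:
  "zgen S = UNIV \<longleftrightarrow> (\<forall>\<theta>1 \<theta>2. annihilates \<theta>1 \<theta>2 S \<longrightarrow> \<theta>1 \<in> \<int> \<and> \<theta>2 \<in> \<int>)"
proof (intro iffI allI impI)
  fix \<theta>1 \<theta>2 :: real
  assume "zgen S = UNIV" and "annihilates \<theta>1 \<theta>2 S"
  then have "annihilates \<theta>1 \<theta>2 UNIV"
    using annihilates_zgen_iff by metis
  then have "of_int 1 * \<theta>1 + of_int 0 * \<theta>2 \<in> \<int>" "of_int 0 * \<theta>1 + of_int 1 * \<theta>2 \<in> \<int>"
    unfolding annihilates_def by blast+
  then show "\<theta>1 \<in> \<int> \<and> \<theta>2 \<in> \<int>"
    by simp
next
  assume integral: "\<forall>\<theta>1 \<theta>2. annihilates \<theta>1 \<theta>2 S \<longrightarrow> \<theta>1 \<in> \<int> \<and> \<theta>2 \<in> \<int>"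
  show "zgen S = UNIV"
  proof (rule ccontr)
    assume "zgen S \<noteq> UNIV"
    obtain \<theta>1 \<theta>2 where "\<not> (\<theta>1 \<in> \<int> \<and> \<theta>2 \<in> \<int>)" "annihilates \<theta>1 \<theta>2 (zgen S)"
    proof (cases "\<exists>b. (1, b) \<in> zgen S")
      case True
      then obtain b where b: "(1, b) \<in> zgen S"
        by blast
      obtain d where "2 \<le> d" "annihilates (- of_int b / of_int d) (1 / of_int d) (zgen S)"
        by (rule zgen_annihilator_if_first_unit[OF b \<open>zgen S \<noteq> UNIV\<close>])
      then show ?thesis
        using one_div_int_notin_Ints that by blast
    next
      case False
      obtain d where "2 \<le> d" "annihilates (1 / of_int d) 0 (zgen S)"
        by (rule zgen_annihilator_if_no_first_unit) (use False in blast)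
      then show ?thesis
        using one_div_int_notin_Ints that by blast
    qed
    then show False
      using integral by (simp add: annihilates_zgen_iff)
  qed
qed

section \<open>Periods of a function and its Fourier support\<close>

definition only_lattice_periods :: "(real \<times> real \<Rightarrow> 'a) \<Rightarrow> bool" where
  "only_lattice_periods G \<longleftrightarrow> (\<forall>w. (\<forall>z. G (z + w) = G z) \<longrightarrow> torus_eq w 0)"

lemma translation_invariant_iff_characters:
  fixes G :: "real \<times> real \<Rightarrow> real"
  assumes cont: "continuous_on UNIV G" and per: "torus_periodic G"
  shows "(\<forall>z. G (z + w) = G z) \<longleftrightarrow> (\<forall>(n, m) \<in> fourier_support G. character n m w = 1)"
proof
  assume "\<forall>z. G (z + w) = G z"
  then have "(\<lambda>z. G (z + w)) = G"
    by blast
  then have "fourier_coeff G n m = character n m w * fourier_coeff G n m" for n m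
    using fourier_coeff_translate[OF cont per, of w n m] by simp
  then show "\<forall>(n, m) \<in> fourier_support G. character n m w = 1"
    by (auto simp: fourier_support_def)
next
  assume characters: "\<forall>(n, m) \<in> fourier_support G. character n m w = 1"
  define F where "F z = G (z + w) - G z" for z
  have cont_translate: "continuous_on UNIV (\<lambda>z. G (z + w))"
    by (intro continuous_on_compose2[OF cont] continuous_intros) auto
  have "continuous_on UNIV F"
    unfolding F_def by (intro continuous_on_diff cont cont_translate)
  moreover have "torus_periodic F"
    using per torus_periodic_translate[OF per, of w] by (simp add: torus_periodic_def F_def)
  moreover have "fourier_coeff F n m = 0" for n m
  proof -
    have "fourier_coeff F n m = (character n m w - 1) * fourier_coeff G n m"
      unfolding F_def fourier_coeff_diff[OF cont_translate cont] fourier_coeff_translate[OF cont per]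
      by (simp add: algebra_simps)
    then show ?thesis
      using characters by (cases "(n, m) \<in> fourier_support G") (auto simp: fourier_support_def)
  qed
  ultimately have "F z = 0" for z
    by (rule fourier_coeff_eq_0_imp_eq_0)
  then show "\<forall>z. G (z + w) = G z"
    by (simp add: F_def)
qed

lemma zgen_fourier_support_eq_UNIV_iff:
  fixes G :: "real \<times> real \<Rightarrow> real"
  assumes "continuous_on UNIV G" and "torus_periodic G"
  shows "zgen (fourier_support G) = UNIV \<longleftrightarrow> only_lattice_periods G"
proof -
  have periods: "(\<forall>z. G (z + w) = G z) \<longleftrightarrow> annihilates (fst w / (2 * pi)) (snd w / (2 * pi)) (fourier_support G)"
    for w
    unfolding translation_invariant_iff_characters[OF assms] character_eq_1_iff annihilates_def
    by (simp add: add_divide_distrib)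
  have "only_lattice_periods G \<longleftrightarrow> (\<forall>w. annihilates (fst w / (2 * pi)) (snd w / (2 * pi)) (fourier_support G)
      \<longrightarrow> fst w / (2 * pi) \<in> \<int> \<and> snd w / (2 * pi) \<in> \<int>)"
    unfolding only_lattice_periods_def periods torus_eq_0_iff ..
  also have "\<dots> \<longleftrightarrow> (\<forall>\<theta>1 \<theta>2. annihilates \<theta>1 \<theta>2 (fourier_support G) \<longrightarrow> \<theta>1 \<in> \<int> \<and> \<theta>2 \<in> \<int>)"
  proof (intro iffI allI impI)
    fix \<theta>1 \<theta>2 :: real
    assume "\<forall>w. annihilates (fst w / (2 * pi)) (snd w / (2 * pi)) (fourier_support G)
        \<longrightarrow> fst w / (2 * pi) \<in> \<int> \<and> snd w / (2 * pi) \<in> \<int>"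
    from spec[OF this, of "(2 * pi * \<theta>1, 2 * pi * \<theta>2)"]
    show "annihilates \<theta>1 \<theta>2 (fourier_support G) \<Longrightarrow> \<theta>1 \<in> \<int> \<and> \<theta>2 \<in> \<int>"
      by simp
  qed blast
  finally show ?thesis
    by (simp add: zgen_eq_UNIV_iff)
qed

section \<open>Density of discrete linear orbits\<close>

definition int_independent3 :: "real \<Rightarrow> real \<Rightarrow> real \<Rightarrow> bool" where
  "int_independent3 a b c \<longleftrightarrow>
     (\<forall>i j k :: int. of_int i * a + of_int j * b + of_int k * c = 0 \<longrightarrow> i = 0 \<and> j = 0 \<and> k = 0)"

lemma int_independent3_imp_distinct:
  assumes "int_independent3 a b c"
  shows "a \<noteq> b" "a \<noteq> c" "b \<noteq> c"
  using assms[unfolded int_independent3_def, rule_format, of 1 "- 1" 0]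
    assms[unfolded int_independent3_def, rule_format, of 1 0 "- 1"]
    assms[unfolded int_independent3_def, rule_format, of 0 1 "- 1"]
  by auto

lemma int_independent3_imp_independent:
  assumes "int_independent3 a b c"
  shows "module.independent (\<lambda>r x. of_int r * x) {a, b, c}"
proof -
  interpret M: module "\<lambda>r x. real_of_int r * x"
    by unfold_locales (auto simp: algebra_simps)
  have rel: "i = 0 \<and> j = 0 \<and> k = 0" if "of_int i * a + of_int j * b + of_int k * c = 0" for i j k :: int
    using assms that unfolding int_independent3_def by blast
  show ?thesis
    unfolding M.independent_explicit_module
  proof (intro allI impI)
    fix T u v
    assume T: "finite T" "T \<subseteq> {a, b, c}" and sum: "(\<Sum>v\<in>T. real_of_int (u v) * v) = 0" and "v \<in> T"
    define U where "U v = (if v \<in> T then u v else 0)" for v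
    have "(\<Sum>v\<in>T. real_of_int (u v) * v) = (\<Sum>v\<in>{a, b, c}. real_of_int (U v) * v)"
      by (rule sum.mono_neutral_cong_left) (use T in \<open>auto simp: U_def\<close>)
    also have "\<dots> = real_of_int (U a) * a + real_of_int (U b) * b + real_of_int (U c) * c"
      using int_independent3_imp_distinct[OF assms] by simp
    finally have "U a = 0 \<and> U b = 0 \<and> U c = 0"
      using sum rel by metis
    moreover have "v = a \<or> v = b \<or> v = c"
      using T \<open>v \<in> T\<close> by auto
    ultimately show "u v = 0"
      using \<open>v \<in> T\<close> by (auto simp: U_def)
  qed
qed

lemma simultaneous_int_approximation:
  assumes indep: "int_independent3 a b 1" and "0 < e"
  obtains k m n :: int where "\<bar>of_int k * a - of_int m - x\<bar> < e" "\<bar>of_int k * b - of_int n - y\<bar> < e"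
proof -
  define \<theta> :: "nat \<Rightarrow> real" where "\<theta> i = (if i = 0 then a else if i = 1 then b else 1)" for i
  define target :: "nat \<Rightarrow> real" where "target i = (if i = 0 then x else y)" for i
  have "{..2::nat} = {0, 1, 2}"
    by auto
  then have range: "\<theta> ` {..2} = {a, b, 1}" and "inj_on \<theta> {..2}"
    using int_independent3_imp_distinct[OF indep] by (auto simp: \<theta>_def inj_on_def)
  obtain k m where "\<And>i. i < 2 \<Longrightarrow> \<bar>of_int k * \<theta> i - of_int (m i) - target i\<bar> < e"
    using Kronecker_thm_2[of \<theta> 2 e target] int_independent3_imp_independent[OF indep] range
      \<open>inj_on \<theta> {..2}\<close> \<open>0 < e\<close>
    by (auto simp: \<theta>_def)
  from this[of 0] this[of 1] show ?thesis
    by (intro that[of k "m 0" "m 1"]) (simp_all add: \<theta>_def target_def)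
qed

lemma int_relation_if_irrational_ratio:
  fixes \<alpha> \<beta> :: real
  assumes irrational: "\<alpha> / \<beta> \<notin> \<rat>" and "of_int i * \<alpha> + of_int j * \<beta> = 0"
  shows "i = 0 \<and> j = 0"
proof (rule ccontr)
  assume "\<not> (i = 0 \<and> j = 0)"
  moreover have "\<beta> \<noteq> 0"
    using irrational by auto
  ultimately have "i \<noteq> 0"
    using assms(2) by auto
  then have "\<alpha> / \<beta> = - of_int j / of_int i"
    using assms(2) \<open>\<beta> \<noteq> 0\<close> by (simp add: field_simps add_eq_0_iff)
  then show False
    using irrational by simp
qed

lemma ex_int_independent_time_step:
  fixes \<alpha> \<beta> :: real
  assumes irrational: "\<alpha> / \<beta> \<notin> \<rat>"
  obtains \<tau> where "0 < \<tau>" "int_independent3 (\<tau> * \<alpha>) (\<tau> * \<beta>) (2 * pi)"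
proof -
  define bad where
    "bad = (\<lambda>(i, j, k). - 2 * pi * of_int k / (of_int i * \<alpha> + of_int j * \<beta>)) ` (UNIV :: (int \<times> int \<times> int) set)"
  have "countable bad"
    unfolding bad_def by simp
  then have "{0<..<1::real} - bad \<noteq> {}"
    using uncountable_open_interval[of 0 "1::real"] countable_subset by force
  then obtain \<tau> where "\<tau> \<in> {0<..<1}" "\<tau> \<notin> bad"
    by blast
  then have \<tau>: "0 < \<tau>" "\<tau> \<notin> bad"
    by simp_all
  have "i = 0 \<and> j = 0 \<and> k = 0"
    if rel: "of_int i * (\<tau> * \<alpha>) + of_int j * (\<tau> * \<beta>) + of_int k * (2 * pi) = 0" for i j k :: int
  proof (cases "of_int i * \<alpha> + of_int j * \<beta> = 0")
    case True
    then have "i = 0" "j = 0"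
      using int_relation_if_irrational_ratio[OF irrational] by blast+
    then show ?thesis
      using rel by simp
  next
    case False
    then have "\<tau> = - 2 * pi * of_int k / (of_int i * \<alpha> + of_int j * \<beta>)"
      using rel by (simp add: field_simps)
    then have "\<tau> \<in> bad"
      unfolding bad_def by (auto intro!: image_eqI[of _ _ "(i, j, k)"])
    then show ?thesis
      using \<tau> by blast
  qed
  then show ?thesis
    using that \<tau> by (auto simp: int_independent3_def)
qed

lemma orbit_dense_mod_lattice:
  assumes indep: "int_independent3 (\<tau> * \<alpha>) (\<tau> * \<beta>) (2 * pi)" and "0 < r"
  obtains k :: int and q where "torus_eq q (p + (of_int k * \<tau>) *\<^sub>R (\<alpha>, \<beta>))" "dist q z < r"
proof -
  define a where "a = \<tau> * \<alpha> / (2 * pi)"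
  define b where "b = \<tau> * \<beta> / (2 * pi)"
  have "int_independent3 a b 1"
    unfolding int_independent3_def
  proof (intro allI impI)
    fix i j k :: int
    assume "of_int i * a + of_int j * b + of_int k * 1 = 0"
    then have "of_int i * (\<tau> * \<alpha>) + of_int j * (\<tau> * \<beta>) + of_int k * (2 * pi) = 0"
      by (simp add: a_def b_def field_simps)
    then show "i = 0 \<and> j = 0 \<and> k = 0"
      using indep by (simp add: int_independent3_def)
  qed
  moreover have "0 < r / (4 * pi)"
    using \<open>0 < r\<close> by simp
  ultimately obtain k m n :: int
    where m: "\<bar>of_int k * a - of_int m - (fst z - fst p) / (2 * pi)\<bar> < r / (4 * pi)"
      and n: "\<bar>of_int k * b - of_int n - (snd z - snd p) / (2 * pi)\<bar> < r / (4 * pi)"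
    by (rule simultaneous_int_approximation)
  define q where "q = p + (of_int k * \<tau>) *\<^sub>R (\<alpha>, \<beta>) - (2 * pi * of_int m, 2 * pi * of_int n)"
  have "fst q - fst z = 2 * pi * (of_int k * a - of_int m - (fst z - fst p) / (2 * pi))"
    "snd q - snd z = 2 * pi * (of_int k * b - of_int n - (snd z - snd p) / (2 * pi))"
    by (simp_all add: q_def a_def b_def field_simps)
  moreover have "2 * pi * t < r / 2" if "t < r / (4 * pi)" for t
    using that by (simp add: field_simps)
  ultimately have "\<bar>fst q - fst z\<bar> < r / 2" "\<bar>snd q - snd z\<bar> < r / 2"
    using m n by (simp_all add: abs_mult)
  moreover have "dist q z \<le> \<bar>fst q - fst z\<bar> + \<bar>snd q - snd z\<bar>"
    using sqrt_sum_squares_le_sum_abs[of "fst q - fst z" "snd q - snd z"]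
    by (cases q, cases z) (simp add: dist_Pair_Pair dist_real_def)
  ultimately have "dist q z < r"
    by linarith
  moreover have "torus_eq q (p + (of_int k * \<tau>) *\<^sub>R (\<alpha>, \<beta>))"
    unfolding torus_eq_def q_def by (rule exI[of _ "- m"], rule exI[of _ "- n"]) simp
  ultimately show ?thesis
    by (rule that[rotated])
qed

lemma periodic_nonzero_on_orbit:
  fixes f :: "real \<times> real \<Rightarrow> real"
  assumes indep: "int_independent3 (\<tau> * \<alpha>) (\<tau> * \<beta>) (2 * pi)"
    and cont: "continuous_on UNIV f" and per: "torus_periodic f" and "f z \<noteq> 0"
  obtains k :: int where "f (p + (of_int k * \<tau>) *\<^sub>R (\<alpha>, \<beta>)) \<noteq> 0"
proof -
  have "isCont f z"
    using cont continuous_on_eq_continuous_at open_UNIV by blast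
  then obtain r where "0 < r" and r: "\<And>q. dist z q < r \<Longrightarrow> f q \<noteq> 0"
    using continuous_at_avoid[of z f 0] \<open>f z \<noteq> 0\<close> by blast
  obtain k q where "torus_eq q (p + (of_int k * \<tau>) *\<^sub>R (\<alpha>, \<beta>))" "dist q z < r"
    using orbit_dense_mod_lattice[OF indep \<open>0 < r\<close>] .
  then show ?thesis
    using that r[of q] torus_periodic_torus_eq[OF per] by (simp add: dist_commute)
qed

lemma compact_bounded_nonzero_index:
  fixes f :: "int \<Rightarrow> 'a::topological_space \<Rightarrow> real"
  assumes "compact K" and cont: "\<And>k. continuous_on UNIV (f k)" and nonzero: "\<And>x. x \<in> K \<Longrightarrow> \<exists>k. f k x \<noteq> 0"
  obtains M :: nat where "\<And>x. x \<in> K \<Longrightarrow> \<exists>k. \<bar>k\<bar> \<le> int M \<and> f k x \<noteq> 0"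
proof -
  have "open {x. f k x \<noteq> 0}" if "k \<in> UNIV" for k
    using open_Collect_neq[OF cont continuous_on_const] .
  moreover have "K \<subseteq> (\<Union>k\<in>UNIV. {x. f k x \<noteq> 0})"
    using nonzero by blast
  ultimately obtain D where "D \<subseteq> UNIV" "finite D" and D: "K \<subseteq> (\<Union>k\<in>D. {x. f k x \<noteq> 0})"
    by (rule compactE_image[OF \<open>compact K\<close>])
  define M where "M = nat (\<Sum>k\<in>D. \<bar>k\<bar>)"
  have bound: "\<bar>k\<bar> \<le> int M" if "k \<in> D" for k
    using member_le_sum[of k D abs] that \<open>finite D\<close> by (simp add: M_def)
  show ?thesis
  proof (rule that)
    fix x
    assume "x \<in> K"
    then obtain k where "k \<in> D" "f k x \<noteq> 0"
      using D by blast
    then show "\<exists>k. \<bar>k\<bar> \<le> int M \<and> f k x \<noteq> 0"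
      using bound by blast
  qed
qed

section \<open>Takens embeddings of periodic \<open>C\<^sup>1\<close> functions\<close>

lemma lin_flow_eq: "lin_flow a b t p = p + t *\<^sub>R (a, b)"
  by (simp add: lin_flow_def plus_prod_def)

locale periodic_C1 =
  fixes G Gx Gy :: "real \<times> real \<Rightarrow> real"
  assumes has_derivative_G: "\<And>p. (G has_derivative (\<lambda>h. fst h * Gx p + snd h * Gy p)) (at p)"
    and continuous_Gx: "continuous_on UNIV Gx" and continuous_Gy: "continuous_on UNIV Gy"
    and periodic_G: "torus_periodic G"
begin

definition deriv_along :: "real \<times> real \<Rightarrow> real \<times> real \<Rightarrow> real" where
  "deriv_along z u = fst u * Gx z + snd u * Gy z"

(* The difference quotient (G (z + s u) - G z) / s, written as an average of derivatives: this
   extends it continuously to s = 0, where it is the directional derivative. *)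
definition divided_diff :: "real \<times> real \<Rightarrow> real \<times> real \<Rightarrow> real \<Rightarrow> real" where
  "divided_diff z u s = integral {0..1} (\<lambda>t. deriv_along (z + (t * s) *\<^sub>R u) u)"

lemma continuous_G: "continuous_on UNIV G"
  using has_derivative_continuous[OF has_derivative_G] continuous_at_imp_continuous_on by blast

lemma frechet_derivative_G: "frechet_derivative G (at z) = deriv_along z"
  using frechet_derivative_at[OF has_derivative_G[of z]] by (simp add: deriv_along_def fun_eq_iff)

lemma continuous_on_divided_diff: "continuous_on UNIV (\<lambda>(z, u, s). divided_diff z u s)"
proof -
  have "continuous_on UNIV (\<lambda>(z, u). deriv_along z u)"
    unfolding deriv_along_def case_prod_unfold
    by (intro continuous_intros continuous_on_compose2[OF continuous_Gx]
        continuous_on_compose2[OF continuous_Gy]) auto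
  then have "continuous_on (UNIV \<times> cbox 0 1) (\<lambda>y. (\<lambda>(z, u). deriv_along z u)
      ((\<lambda>(x, t::real). (fst x + (t * snd (snd x)) *\<^sub>R fst (snd x), fst (snd x))) y))"
    by (rule continuous_on_compose2) (auto simp: case_prod_unfold intro!: continuous_intros)
  then have "continuous_on (UNIV \<times> cbox 0 1)
      (\<lambda>(x, t). deriv_along (fst x + (t * snd (snd x)) *\<^sub>R fst (snd x)) (fst (snd x)))"
    by (simp add: case_prod_unfold)
  then have "continuous_on UNIV
      (\<lambda>x. integral (cbox 0 1) (\<lambda>t. deriv_along (fst x + (t * snd (snd x)) *\<^sub>R fst (snd x)) (fst (snd x))))"
    by (rule integral_continuous_on_param)
  then show ?thesis
    by (simp add: divided_diff_def case_prod_unfold)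
qed

lemma divided_diff_0: "divided_diff z u 0 = deriv_along z u"
  by (simp add: divided_diff_def)

lemma mult_divided_diff: "s * divided_diff z u s = G (z + s *\<^sub>R u) - G z"
proof -
  have "G (z + s *\<^sub>R u) - G z
      = integral {0..1} (\<lambda>t. fst (s *\<^sub>R u) * Gx (z + t *\<^sub>R (s *\<^sub>R u)) + snd (s *\<^sub>R u) * Gy (z + t *\<^sub>R (s *\<^sub>R u)))"
    by (rule mvt_integral[of UNIV G, OF has_derivative_subset[OF has_derivative_G]]) auto
  also have "\<dots> = integral {0..1} (\<lambda>t. s * deriv_along (z + (t * s) *\<^sub>R u) u)"
    by (rule integral_cong) (simp add: deriv_along_def algebra_simps)
  also have "\<dots> = s * divided_diff z u s"
    by (simp add: divided_diff_def)
  finally show ?thesis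
    by simp
qed

lemma partials_translation_invariant:
  assumes "\<And>z. G (z + c) = G z"
  shows "Gx (p + c) = Gx p" "Gy (p + c) = Gy p"
proof -
  have "((\<lambda>z. G (z + c)) has_derivative (\<lambda>h. fst h * Gx (p + c) + snd h * Gy (p + c))) (at p)"
    using has_derivative_compose[OF has_derivative_add[OF has_derivative_ident has_derivative_const]
        has_derivative_G] by (simp add: o_def)
  then have "(G has_derivative (\<lambda>h. fst h * Gx (p + c) + snd h * Gy (p + c))) (at p)"
    using assms by simp
  then have "(\<lambda>h. fst h * Gx (p + c) + snd h * Gy (p + c)) = (\<lambda>h. fst h * Gx p + snd h * Gy p)"
    using has_derivative_unique has_derivative_G by blast
  from fun_cong[OF this, of "(1, 0)"] fun_cong[OF this, of "(0, 1)"]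
  show "Gx (p + c) = Gx p" "Gy (p + c) = Gy p"
    by simp_all
qed

lemma torus_periodic_partials: "torus_periodic Gx" "torus_periodic Gy"
proof -
  have G: "G (z + (2 * pi, 0)) = G z" "G (z + (0, 2 * pi)) = G z" for z
    using periodic_G by (cases z; simp add: torus_periodic_def)+
  have "Gx ((x, y) + (2 * pi, 0)) = Gx (x, y)" "Gx ((x, y) + (0, 2 * pi)) = Gx (x, y)"
    "Gy ((x, y) + (2 * pi, 0)) = Gy (x, y)" "Gy ((x, y) + (0, 2 * pi)) = Gy (x, y)" for x y
    using partials_translation_invariant[OF G(1)] partials_translation_invariant[OF G(2)] by blast+
  then show "torus_periodic Gx" "torus_periodic Gy"
    by (simp_all add: torus_periodic_def)
qed

lemma torus_periodic_divided_diff: "torus_periodic (\<lambda>z. divided_diff z u s)"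
  using torus_periodic_translate[OF torus_periodic_partials(1)]
    torus_periodic_translate[OF torus_periodic_partials(2)]
  unfolding torus_periodic_def divided_diff_def deriv_along_def by simp

lemma deriv_along_eq_0_imp_period:
  assumes "\<And>z. deriv_along z u = 0"
  shows "G (z + u) = G z"
proof -
  have "((\<lambda>t. z + t *\<^sub>R u) has_derivative (\<lambda>h. h *\<^sub>R u)) (at t)" for t
    by (auto intro!: derivative_eq_intros)
  from has_derivative_compose[OF this has_derivative_G]
  have "((\<lambda>t. G (z + t *\<^sub>R u)) has_derivative (\<lambda>h. h * deriv_along (z + t *\<^sub>R u) u)) (at t)" for t
    by (simp add: o_def deriv_along_def algebra_simps)
  then have "((\<lambda>t. G (z + t *\<^sub>R u)) has_derivative (\<lambda>h. 0)) (at t within UNIV)" for t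
    using assms by simp
  then obtain c where "\<And>t. G (z + t *\<^sub>R u) = c"
    using has_derivative_zero_constant[of UNIV "\<lambda>t. G (z + t *\<^sub>R u)"] by auto
  from this[of 1] this[of 0] show ?thesis
    by simp
qed

lemma divided_diff_not_identically_0:
  assumes "only_lattice_periods G" and "norm u = 1" and "0 \<le> s" "s \<le> sqrt 2 * pi"
  obtains z where "divided_diff z u s \<noteq> 0"
proof (rule ccontr)
  assume "\<not> thesis"
  then have zero: "divided_diff z u s = 0" for z
    using that by blast
  define w where "w = (if s = 0 then u else s *\<^sub>R u)"
  have "G (z + w) = G z" for z
  proof (cases "s = 0")
    case True
    then show ?thesis
      using deriv_along_eq_0_imp_period[of u] zero by (simp add: w_def divided_diff_0)
  next
    case False
    then show ?thesis
      using mult_divided_diff[of s z u] zero by (simp add: w_def)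
  qed
  then have "torus_eq w 0"
    using assms(1) unfolding only_lattice_periods_def by blast
  moreover have "w \<noteq> 0" "norm w < 2 * pi"
  proof -
    have "sqrt 2 * pi < 2 * pi"
      using sqrt2_less_2 by simp
    then have "s < 2 * pi"
      using assms(4) by linarith
    then show "w \<noteq> 0" "norm w < 2 * pi"
      using assms(2,3) pi_gt3 by (auto simp: w_def)
  qed
  ultimately show False
    using norm_ge_2pi_if_torus_eq_0[of w] by linarith
qed

(* Two points of the torus differ by a vector of length at most sqrt 2 * pi
   (ex_torus_eq_norm_le), which is less than the length 2 * pi of the shortest lattice
   vector; s = 0 accounts for tangent vectors. *)
definition orbit_separating :: "nat \<Rightarrow> real \<Rightarrow> real \<times> real \<Rightarrow> bool" where
  "orbit_separating N \<tau> v \<longleftrightarrow>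
     (\<forall>p u s. norm u = 1 \<longrightarrow> 0 \<le> s \<longrightarrow> s \<le> sqrt 2 * pi \<longrightarrow>
        (\<exists>k\<le>N. divided_diff (p + (real k * \<tau>) *\<^sub>R v) u s \<noteq> 0))"

lemma orbit_separatingD:
  assumes "orbit_separating N \<tau> v" and "norm u = 1" and "0 \<le> s" and "s \<le> sqrt 2 * pi"
  obtains k where "k \<le> N" "divided_diff (p + (real k * \<tau>) *\<^sub>R v) u s \<noteq> 0"
  using assms unfolding orbit_separating_def by blast

lemma continuous_on_divided_diff_fixed: "continuous_on UNIV (\<lambda>z. divided_diff z u s)"
proof -
  have "continuous_on UNIV (\<lambda>z. (\<lambda>(z, u, s). divided_diff z u s) (z, u, s))"
    by (rule continuous_on_compose2[OF continuous_on_divided_diff]) (auto intro!: continuous_intros)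
  then show ?thesis
    by simp
qed

lemma orbit_separating_mono: "orbit_separating N \<tau> v \<Longrightarrow> N \<le> N' \<Longrightarrow> orbit_separating N' \<tau> v"
  unfolding orbit_separating_def by (meson order_trans)

lemma ex_uniform_orbit_bound:
  assumes periods: "only_lattice_periods G" and indep: "int_independent3 (\<tau> * \<alpha>) (\<tau> * \<beta>) (2 * pi)"
  obtains M :: nat where "\<And>q u s. q \<in> period_square \<Longrightarrow> norm u = 1 \<Longrightarrow> 0 \<le> s \<Longrightarrow> s \<le> sqrt 2 * pi \<Longrightarrow>
    \<exists>k. \<bar>k\<bar> \<le> int M \<and> divided_diff (q + (of_int k * \<tau>) *\<^sub>R (\<alpha>, \<beta>)) u s \<noteq> 0"
proof -
  define K :: "((real \<times> real) \<times> (real \<times> real) \<times> real) set"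
    where "K = period_square \<times> sphere 0 1 \<times> {0..sqrt 2 * pi}"
  define f where "f k x = divided_diff (fst x + (of_int k * \<tau>) *\<^sub>R (\<alpha>, \<beta>)) (fst (snd x)) (snd (snd x))"
    for k :: int and x :: "(real \<times> real) \<times> (real \<times> real) \<times> real"
  have compact: "compact K"
    unfolding K_def by (intro compact_Times compact_cbox compact_sphere compact_Icc)
  have continuous: "continuous_on UNIV (f k)" for k
  proof -
    have "continuous_on UNIV (\<lambda>x. (\<lambda>(z, u, s). divided_diff z u s)
        (fst x + (of_int k * \<tau>) *\<^sub>R (\<alpha>, \<beta>), fst (snd x), snd (snd x)))"
      by (rule continuous_on_compose2[OF continuous_on_divided_diff]) (auto intro!: continuous_intros)
    then show ?thesis
      by (simp add: f_def case_prod_unfold)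
  qed
  have nonzero: "\<exists>k. f k x \<noteq> 0" if "x \<in> K" for x
  proof -
    obtain p u s where x: "x = (p, u, s)"
      by (cases x) auto
    then have "norm u = 1" "0 \<le> s" "s \<le> sqrt 2 * pi"
      using that by (auto simp: K_def)
    then obtain z where "divided_diff z u s \<noteq> 0"
      using divided_diff_not_identically_0[OF periods] by blast
    then obtain k where "divided_diff (p + (of_int k * \<tau>) *\<^sub>R (\<alpha>, \<beta>)) u s \<noteq> 0"
      by (rule periodic_nonzero_on_orbit[OF indep continuous_on_divided_diff_fixed torus_periodic_divided_diff])
    then show ?thesis
      by (auto simp: f_def x)
  qed
  obtain M where M: "\<And>x. x \<in> K \<Longrightarrow> \<exists>k. \<bar>k\<bar> \<le> int M \<and> f k x \<noteq> 0"
    using compact_bounded_nonzero_index[OF compact continuous nonzero] by blast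
  show ?thesis
  proof (rule that)
    fix q u :: "real \<times> real" and s :: real
    assume "q \<in> period_square" "norm u = 1" "0 \<le> s" "s \<le> sqrt 2 * pi"
    then have "(q, u, s) \<in> K"
      by (simp add: K_def)
    then show "\<exists>k. \<bar>k\<bar> \<le> int M \<and> divided_diff (q + (of_int k * \<tau>) *\<^sub>R (\<alpha>, \<beta>)) u s \<noteq> 0"
      using M[of "(q, u, s)"] by (simp add: f_def)
  qed
qed

lemma ex_orbit_separating:
  assumes "only_lattice_periods G" and "int_independent3 (\<tau> * \<alpha>) (\<tau> * \<beta>) (2 * pi)"
  obtains N where "orbit_separating N \<tau> (\<alpha>, \<beta>)"
proof -
  obtain M where M: "\<And>q u s. q \<in> period_square \<Longrightarrow> norm u = 1 \<Longrightarrow> 0 \<le> s \<Longrightarrow> s \<le> sqrt 2 * pi \<Longrightarrow>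
    \<exists>k. \<bar>k\<bar> \<le> int M \<and> divided_diff (q + (of_int k * \<tau>) *\<^sub>R (\<alpha>, \<beta>)) u s \<noteq> 0"
    using ex_uniform_orbit_bound[OF assms] by blast
  have "orbit_separating (2 * M) \<tau> (\<alpha>, \<beta>)"
    unfolding orbit_separating_def
  proof (intro allI impI)
    fix p u :: "real \<times> real" and s :: real
    assume "norm u = 1" "0 \<le> s" "s \<le> sqrt 2 * pi"
    obtain q where q: "torus_eq (p + (real M * \<tau>) *\<^sub>R (\<alpha>, \<beta>)) q" "q \<in> period_square"
      by (rule ex_torus_eq_in_period_square)
    then obtain k where k: "\<bar>k\<bar> \<le> int M" "divided_diff (q + (of_int k * \<tau>) *\<^sub>R (\<alpha>, \<beta>)) u s \<noteq> 0"
      using M[OF q(2) \<open>norm u = 1\<close> \<open>0 \<le> s\<close> \<open>s \<le> sqrt 2 * pi\<close>] by blast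
    have "torus_eq (p + (real (nat (int M + k)) * \<tau>) *\<^sub>R (\<alpha>, \<beta>)) (q + (of_int k * \<tau>) *\<^sub>R (\<alpha>, \<beta>))"
      using torus_eq_translate[OF q(1), of "(of_int k * \<tau>) *\<^sub>R (\<alpha>, \<beta>)"] k(1)
      by (simp add: algebra_simps flip: scaleR_left_distrib)
    then have "divided_diff (p + (real (nat (int M + k)) * \<tau>) *\<^sub>R (\<alpha>, \<beta>)) u s \<noteq> 0"
      using k(2) torus_periodic_torus_eq[OF torus_periodic_divided_diff] by simp
    moreover have "nat (int M + k) \<le> 2 * M"
      using k(1) by linarith
    ultimately show "\<exists>k\<le>2 * M. divided_diff (p + (real k * \<tau>) *\<^sub>R (\<alpha>, \<beta>)) u s \<noteq> 0"
      by blast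
  qed
  then show ?thesis
    by (rule that)
qed

lemma torus_eq_if_orbit_separating:
  assumes sep: "orbit_separating N \<tau> (\<alpha>, \<beta>)"
    and agree: "\<And>k. k \<le> N \<Longrightarrow> G (p + (real k * \<tau>) *\<^sub>R (\<alpha>, \<beta>)) = G (q + (real k * \<tau>) *\<^sub>R (\<alpha>, \<beta>))"
  shows "torus_eq p q"
proof (rule ccontr)
  assume "\<not> torus_eq p q"
  obtain w where w: "torus_eq (q - p) w" "norm w \<le> sqrt 2 * pi"
    by (rule ex_torus_eq_norm_le)
  have "w \<noteq> 0"
  proof
    assume "w = 0"
    then have "torus_eq q p"
      using torus_eq_translate[OF w(1), of p] by simp
    then show False
      using \<open>\<not> torus_eq p q\<close> torus_eq_sym by blast
  qed
  define u where "u = (1 / norm w) *\<^sub>R w"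
  have "norm u = 1" "norm w *\<^sub>R u = w"
    using \<open>w \<noteq> 0\<close> by (simp_all add: u_def)
  then obtain k where "k \<le> N" and k: "divided_diff (p + (real k * \<tau>) *\<^sub>R (\<alpha>, \<beta>)) u (norm w) \<noteq> 0"
    using orbit_separatingD[OF sep _ norm_ge_zero w(2)] by blast
  let ?z = "p + (real k * \<tau>) *\<^sub>R (\<alpha>, \<beta>)"
  have "G (?z + w) \<noteq> G ?z"
    using mult_divided_diff[of "norm w" ?z u] k \<open>w \<noteq> 0\<close> \<open>norm w *\<^sub>R u = w\<close> by auto
  moreover have "torus_eq (q + (real k * \<tau>) *\<^sub>R (\<alpha>, \<beta>)) (?z + w)"
    using torus_eq_translate[OF w(1), of "?z"] by (simp add: algebra_simps)
  then have "G (q + (real k * \<tau>) *\<^sub>R (\<alpha>, \<beta>)) = G (?z + w)"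
    by (rule torus_periodic_torus_eq[OF periodic_G])
  ultimately show False
    using agree[OF \<open>k \<le> N\<close>] by simp
qed

lemma frechet_derivative_nonzero_if_orbit_separating:
  assumes sep: "orbit_separating N \<tau> (\<alpha>, \<beta>)" and "h \<noteq> 0"
  obtains k where "k \<le> N" "frechet_derivative G (at (p + (real k * \<tau>) *\<^sub>R (\<alpha>, \<beta>))) h \<noteq> 0"
proof -
  define u where "u = (1 / norm h) *\<^sub>R h"
  have "norm u = 1"
    using \<open>h \<noteq> 0\<close> by (simp add: u_def)
  moreover have "0 \<le> sqrt 2 * pi"
    by simp
  ultimately obtain k where "k \<le> N" and k: "divided_diff (p + (real k * \<tau>) *\<^sub>R (\<alpha>, \<beta>)) u 0 \<noteq> 0"
    by (rule orbit_separatingD[OF sep _ order_refl])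
  moreover have "deriv_along z u = deriv_along z h / norm h" for z
    by (simp add: u_def deriv_along_def add_divide_distrib)
  ultimately have "frechet_derivative G (at (p + (real k * \<tau>) *\<^sub>R (\<alpha>, \<beta>))) h \<noteq> 0"
    by (simp add: divided_diff_0 frechet_derivative_G)
  with \<open>k \<le> N\<close> show ?thesis
    by (rule that)
qed

lemma takens_embedding_if_orbit_separating:
  assumes "orbit_separating N \<tau> (\<alpha>, \<beta>)"
  shows "takens_embedding G \<alpha> \<beta> N \<tau>"
  unfolding takens_embedding_def lin_flow_eq
proof (intro conjI allI impI)
  fix p q
  assume "\<forall>k\<le>N. G (p + (real k * \<tau>) *\<^sub>R (\<alpha>, \<beta>)) = G (q + (real k * \<tau>) *\<^sub>R (\<alpha>, \<beta>))"
  then show "torus_eq p q"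
    by (intro torus_eq_if_orbit_separating[OF assms]) blast
next
  fix p h :: "real \<times> real"
  assume "h \<noteq> 0"
  then obtain k where "k \<le> N" "frechet_derivative G (at (p + (real k * \<tau>) *\<^sub>R (\<alpha>, \<beta>))) h \<noteq> 0"
    by (rule frechet_derivative_nonzero_if_orbit_separating[OF assms])
  then show "\<exists>k\<le>N. frechet_derivative G (at (p + (real k * \<tau>) *\<^sub>R (\<alpha>, \<beta>))) h \<noteq> 0"
    by blast
qed

theorem good_observation_if_only_lattice_periods:
  assumes "\<alpha> / \<beta> \<notin> \<rat>" and "only_lattice_periods G"
  shows "good_observation G \<alpha> \<beta>"
proof -
  obtain \<tau> where "0 < \<tau>" and indep: "int_independent3 (\<tau> * \<alpha>) (\<tau> * \<beta>) (2 * pi)"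
    using ex_int_independent_time_step[OF assms(1)] by blast
  obtain N where "orbit_separating N \<tau> (\<alpha>, \<beta>)"
    using ex_orbit_separating[OF assms(2) indep] by blast
  then have "orbit_separating (Suc N) \<tau> (\<alpha>, \<beta>)"
    by (rule orbit_separating_mono) simp
  then have "takens_embedding G \<alpha> \<beta> (Suc N) \<tau>"
    by (rule takens_embedding_if_orbit_separating)
  then show ?thesis
    unfolding good_observation_def using \<open>0 < \<tau>\<close> by blast
qed

end

lemma only_lattice_periods_if_good_observation:
  assumes "good_observation G \<alpha> \<beta>"
  shows "only_lattice_periods G"
  unfolding only_lattice_periods_def
proof (intro allI impI)
  fix w
  assume "\<forall>z. G (z + w) = G z"
  obtain N \<tau> where "takens_embedding G \<alpha> \<beta> N \<tau>"
    using assms unfolding good_observation_def by blast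
  then have injective: "\<forall>p q. (\<forall>k\<le>N. G (p + (real k * \<tau>) *\<^sub>R (\<alpha>, \<beta>)) = G (q + (real k * \<tau>) *\<^sub>R (\<alpha>, \<beta>)))
      \<longrightarrow> torus_eq p q"
    unfolding takens_embedding_def lin_flow_eq by blast
  have "\<forall>k\<le>N. G (w + (real k * \<tau>) *\<^sub>R (\<alpha>, \<beta>)) = G (0 + (real k * \<tau>) *\<^sub>R (\<alpha>, \<beta>))"
    using \<open>\<forall>z. G (z + w) = G z\<close> by (simp add: add.commute)
  then show "torus_eq w 0"
    using injective by blast
qed

lemma smooth2_continuous: "smooth2 f \<Longrightarrow> continuous_on UNIV f"
  by (erule smooth2.cases) (metis continuous_at_imp_continuous_on has_derivative_continuous)

lemma smooth2_imp_periodic_C1: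
  assumes "smooth2 G" and "torus_periodic G"
  obtains Gx Gy where "periodic_C1 G Gx Gy"
  using assms(1)
proof (cases rule: smooth2.cases)
  case (1 Gx Gy)
  then show ?thesis
    using that[of Gx Gy] assms(2) smooth2_continuous by (simp add: periodic_C1_def)
qed

theorem theorem2:
  fixes \<alpha> \<beta> :: real and G :: "real \<times> real \<Rightarrow> real"
  assumes "\<alpha> / \<beta> \<notin> \<rat>"
    and "torus_periodic G"
    and "smooth2 G"
  shows "good_observation G \<alpha> \<beta> \<longleftrightarrow> zgen (fourier_support G) = UNIV"
proof -
  obtain Gx Gy where "periodic_C1 G Gx Gy"
    using smooth2_imp_periodic_C1[OF assms(3,2)] .
  then interpret periodic_C1 G Gx Gy .
  have "good_observation G \<alpha> \<beta> \<longleftrightarrow> only_lattice_periods G"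
    using good_observation_if_only_lattice_periods[OF assms(1)] only_lattice_periods_if_good_observation
    by blast
  also have "\<dots> \<longleftrightarrow> zgen (fourier_support G) = UNIV"
    using zgen_fourier_support_eq_UNIV_iff[OF continuous_G assms(2)] by simp
  finally show ?thesis .
qed

end
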